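(* Let $n\ge1$, $d_1,\dots,d_n\ge1$, $d\ge1$ and $a_1,\dots,a_n\in k_d^\times$, and set $S_d(a_\bullet;d_\bullet)=\sum_{(x_1,\dots,x_n)\in k_d^n}\psi_d\Big(\sum_{1\le i\le n}a_ix_ix_{i+1}^{q^{d_i}}\Big)$ with $x_{n+1}=x_1$. If $n\ge3$, then $S_d(a_\bullet;d_\bullet)=q^d\,S_d\big(a_1,\dots,a_{n-3},\,-a_{n-2}a_{n-1}^{-q^{d_{n-2}}}a_n^{q^{d_{n-2}+d_{n-1}}};\ d_1,\dots,d_{n-3},\,d_{n-2}+d_{n-1}+d_n\big)$, a sum of the same type in $n-2$ variables. If $n=2$, then $S_d(a_1,a_2;d_1,d_2)$ equals $q^d$ times the number of $x_1\in k_d$ satisfying $x_1=-a_1^{-1}a_2^{q^{d_1}}x_1^{q^{d_1+d_2}}$.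
   Context: $k$ is a finite field with $q$ elements, $k_d$ its extension of degree $d$ inside a fixed algebraic closure, $\psi\colon k\to\overline{\mathbb Q}_\ell^\times$ a fixed nontrivial additive character and $\psi_d=\psi\circ\mathrm{Tr}_{k_d/k}$. *)

theory Defs
  imports Complex_Main "HOL-Library.FuncSet"
begin

text \<open>The field k_d is modelled by a finite field type 'a with q^d elements;
 k is its subfield of elements fixed by x \<mapsto> x^q (which has q elements).\<close>

definition trace_kd :: "nat \<Rightarrow> nat \<Rightarrow> 'a::field \<Rightarrow> 'a" where
  "trace_kd q d x = (\<Sum>j<d. x ^ (q ^ j))"

definition psi_d :: "nat \<Rightarrow> nat \<Rightarrow> ('a::field \<Rightarrow> complex) \<Rightarrow> 'a \<Rightarrow> complex" where
  "psi_d q d \<psi> x = \<psi> (trace_kd q d x)"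

text \<open>S_d(a;e) in n variables, indices 0-based, x_n = x_0 (cyclic).\<close>
definition Ssum :: "nat \<Rightarrow> nat \<Rightarrow> ('a::{field,finite} \<Rightarrow> complex) \<Rightarrow> nat \<Rightarrow> (nat \<Rightarrow> 'a) \<Rightarrow> (nat \<Rightarrow> nat) \<Rightarrow> complex" where
  "Ssum q d \<psi> n a e =
     (\<Sum>x \<in> PiE {..<n} (\<lambda>_. (UNIV::'a set)).
        psi_d q d \<psi> (\<Sum>i<n. a i * x i * (x ((i + 1) mod n)) ^ (q ^ e i)))"

end

theory Submission
  imports
    Defs
    "HOL-Algebra.Sylow"
    "HOL-Algebra.Multiplicative_Group"
    "HOL-Computational_Algebra.Primes"
    "HOL-Computational_Algebra.Polynomial"
begin

text \<open>
  Since the trace is invariant under Frobenius, psi_d(A v^(q^E)) = psi_d(A' v) for the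
  (q^E)-th root A' of A, so by orthogonality of the nontrivial character psi_d the sum of
  psi_d(A v^(q^E) + B v) over v is q^d if A + B^(q^E) = 0 and vanishes otherwise.
  In S_d the last variable x_n only occurs in a_(n-1) x_(n-1) x_n^(q^(d_(n-1))) + a_n x_n x_1^(q^(d_n)),
  so summing over x_n forces x_(n-1) = -a_(n-1)^(-1) (a_n x_1^(q^(d_n)))^(q^(d_(n-1))); substituting
  this into the term a_(n-2) x_(n-2) x_(n-1)^(q^(d_(n-2))) leaves a sum of the same shape in
  n - 2 variables. For n = 2 the forced relation involves x_1 alone, and the remaining sum counts
  its solutions. Additivity of x \<mapsto> x^q holds because q, dividing the order of the field, is a
  power of its characteristic.
\<close>

lemma field_power_card_eq_self:
  fixes x :: "'a::{field,finite}"
  shows "x ^ card (UNIV :: 'a set) = x"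
proof (cases "x = 0")
  case True
  then show ?thesis
    using finite_UNIV_card_ge_0[where 'a = 'a] by simp
next
  case False
  define G :: "'a monoid" where "G = \<lparr>carrier = UNIV - {0 :: 'a}, monoid.mult = (*), one = 1\<rparr>"
  have G: "group G"
    unfolding G_def by (rule groupI) (auto simp: mult.assoc intro!: bexI[of _ "inverse _"])
  have pow: "y [^]\<^bsub>\<lparr>carrier = A, monoid.mult = (*), one = 1\<rparr>\<^esub> (n::nat) = (y::'a) ^ n" for A y n
    by (induction n) (simp_all add: mult.commute)
  have "Coset.order G = card (UNIV :: 'a set) - 1"
    by (simp add: Coset.order_def G_def card_Diff_singleton)
  moreover have "\<one>\<^bsub>G\<^esub> = 1"
    by (simp add: G_def)
  ultimately have "x ^ (card (UNIV :: 'a set) - 1) = 1"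
    using group.pow_order_eq_1[OF G, of x] False by (simp add: pow G_def)
  then show ?thesis
    using finite_UNIV_card_ge_0[where 'a = 'a] by (simp add: power_eq_if)
qed

lemma prime_CHAR_finite_field: "prime CHAR('a::{field,finite})"
  by (simp add: finite_imp_CHAR_pos prime_CHAR_semidom)

lemma prime_dvd_card_field_imp_eq_CHAR:
  assumes r: "prime r" and r_dvd: "r dvd card (UNIV :: 'a::{field,finite} set)"
  shows "r = CHAR('a)"
proof -
  define G :: "'a monoid" where "G = \<lparr>carrier = UNIV, monoid.mult = (+), one = 0\<rparr>"
  have G: "group G"
    unfolding G_def by (rule groupI) (auto simp: add.assoc intro!: exI[of _ "- _"])
  obtain m where "Coset.order G = r ^ 1 * m"
    using r_dvd by (auto simp: Coset.order_def G_def)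
  from sylow_thm[OF r G this] obtain H where H: "subgroup H G" "card H = r"
    by (auto simp: G_def)
  have "\<not> H \<subseteq> {0}"
    using H(2) card_mono[of "{0::'a}" H] prime_ge_2_nat[OF r] by auto
  then obtain x where x: "x \<in> H" "x \<noteq> 0"
    by auto
  have pow: "y [^]\<^bsub>\<lparr>carrier = A, monoid.mult = (+), one = 0\<rparr>\<^esub> (n::nat) = of_nat n * (y::'a)" for A y n
    by (induction n) (simp_all add: distrib_right)
  have "x [^]\<^bsub>G\<lparr>carrier := H\<rparr>\<^esub> Coset.order (G\<lparr>carrier := H\<rparr>) = \<one>\<^bsub>G\<lparr>carrier := H\<rparr>\<^esub>"
    using group.pow_order_eq_1[OF group.subgroup_imp_group[OF G H(1)]] x by simp
  then have "of_nat r = (0 :: 'a)"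
    using H(2) x by (simp add: pow Coset.order_def G_def)
  then have "CHAR('a) dvd r"
    by (simp add: of_nat_eq_0_iff_char_dvd)
  then show ?thesis
    using primes_dvd_imp_eq[OF prime_CHAR_finite_field[where 'a = 'a] r] by simp
qed

lemma dvd_card_field_imp_CHAR_power:
  assumes "m dvd card (UNIV :: 'a::{field,finite} set)"
  shows "\<exists>k. m = CHAR('a) ^ k"
proof (rule ccontr)
  assume not_power: "\<nexists>k. m = CHAR('a) ^ k"
  have "m \<noteq> 0"
    using assms finite_UNIV_card_ge_0[where 'a = 'a] by auto
  then obtain r where "r \<in> prime_factors m" "r \<noteq> CHAR('a)"
    using Ex_other_prime_factor[OF _ _ prime_CHAR_finite_field[where 'a = 'a]] not_power by auto
  then show False
    using prime_dvd_card_field_imp_eq_CHAR[of r] assms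
    by (meson dvd_trans in_prime_factors_iff)
qed

context
  fixes q :: nat
  assumes q_dvd_card: "q dvd card (UNIV :: 'a::{field,finite} set)"
begin

lemma frobenius_add: "(x + y :: 'a) ^ (q ^ j) = x ^ (q ^ j) + y ^ (q ^ j)"
proof -
  obtain k where "q = CHAR('a) ^ k"
    using dvd_card_field_imp_CHAR_power[OF q_dvd_card] by blast
  then show ?thesis
    by (intro freshmans_dream'[where n = "k * j"])
      (simp_all add: prime_CHAR_finite_field power_mult)
qed

lemma frobenius_sum: "(sum f A :: 'a) ^ (q ^ j) = (\<Sum>i\<in>A. f i ^ (q ^ j))"
proof -
  obtain k where "q = CHAR('a) ^ k"
    using dvd_card_field_imp_CHAR_power[OF q_dvd_card] by blast
  then show ?thesis
    by (intro freshmans_dream_sum'[where n = "k * j"])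
      (simp_all add: prime_CHAR_finite_field power_mult)
qed

lemma frobenius_uminus: "(- x :: 'a) ^ (q ^ j) = - (x ^ (q ^ j))"
proof -
  have "q \<noteq> 0"
    using q_dvd_card finite_UNIV_card_ge_0[where 'a = 'a] by auto
  then have "x ^ (q ^ j) + (- x) ^ (q ^ j) = 0"
    by (simp flip: frobenius_add)
  then show ?thesis
    by (simp add: add_eq_0_iff)
qed

end

lemma sum_PiE_lessThan_Suc:
  "(\<Sum>x\<in>PiE {..<Suc m} B. F x) = (\<Sum>y\<in>PiE {..<m} B. \<Sum>v\<in>B m. F (y(m := v)))"
proof -
  have inj: "inj_on (\<lambda>(v, y). y(m := v)) (B m \<times> PiE {..<m} B)"
    using inj_combinator[of m "{..<m}" B] by simp
  have "(\<Sum>x\<in>PiE {..<Suc m} B. F x) = (\<Sum>(v, y)\<in>B m \<times> PiE {..<m} B. F (y(m := v)))"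
    unfolding lessThan_Suc PiE_insert_eq sum.reindex[OF inj] by (simp add: case_prod_beta)
  also have "\<dots> = (\<Sum>y\<in>PiE {..<m} B. \<Sum>v\<in>B m. F (y(m := v)))"
    by (simp add: sum.cartesian_product [symmetric] sum.swap[of _ "B m"])
  finally show ?thesis .
qed

definition cyclic_phase :: "nat \<Rightarrow> nat \<Rightarrow> (nat \<Rightarrow> 'a::field) \<Rightarrow> (nat \<Rightarrow> nat) \<Rightarrow> (nat \<Rightarrow> 'a) \<Rightarrow> 'a" where
  "cyclic_phase q n a e x = (\<Sum>i<n. a i * x i * x ((i + 1) mod n) ^ (q ^ e i))"

lemma Ssum_eq_sum_cyclic_phase:
  "Ssum q d \<psi> n a e = (\<Sum>x\<in>PiE {..<n} (\<lambda>_. UNIV). psi_d q d \<psi> (cyclic_phase q n a e x))"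
  by (simp add: Ssum_def cyclic_phase_def)

lemma cyclic_phase_Suc:
  "cyclic_phase q (Suc m) a e x =
     (\<Sum>i<m. a i * x i * x (Suc i) ^ (q ^ e i)) + a m * x m * x 0 ^ (q ^ e m)"
  unfolding cyclic_phase_def by simp

lemma cyclic_phase_update_last_two:
  "cyclic_phase q (Suc (Suc (Suc k))) a e (y(Suc k := u, Suc (Suc k) := v)) =
     ((\<Sum>i<k. a i * y i * y (Suc i) ^ (q ^ e i)) + a k * y k * u ^ (q ^ e k))
     + (a (Suc k) * u * v ^ (q ^ e (Suc k)) + a (Suc (Suc k)) * y 0 ^ (q ^ e (Suc (Suc k))) * v)"
proof -
  let ?z = "y(Suc k := u, Suc (Suc k) := v)"
  have "(\<Sum>i<k. a i * ?z i * ?z (Suc i) ^ (q ^ e i)) = (\<Sum>i<k. a i * y i * y (Suc i) ^ (q ^ e i))"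
    by (intro sum.cong) auto
  then show ?thesis
    by (simp add: cyclic_phase_Suc ac_simps)
qed

lemma add_eq_0_iff_eq_neg_divide:
  fixes \<alpha> :: "'a::field"
  assumes "\<alpha> \<noteq> 0"
  shows "\<alpha> * u + b = 0 \<longleftrightarrow> u = - b / \<alpha>"
proof -
  have "\<alpha> * u + b = 0 \<longleftrightarrow> \<alpha> * u = - b"
    by (rule eq_neg_iff_add_eq_0[symmetric])
  also have "\<dots> \<longleftrightarrow> u = - b / \<alpha>"
    using assms by (auto simp: field_simps)
  finally show ?thesis .
qed

locale trace_character =
  fixes q d :: nat and \<psi> :: "'a::{field,finite} \<Rightarrow> complex"
  assumes q_ge_2: "q \<ge> 2" and d_pos: "d \<ge> 1"
    and card_UNIV: "card (UNIV :: 'a set) = q ^ d"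
    and psi_add: "\<And>x y. x ^ q = x \<Longrightarrow> y ^ q = y \<Longrightarrow> \<psi> (x + y) = \<psi> x * \<psi> y"
    and psi_nonzero: "\<And>x. x ^ q = x \<Longrightarrow> \<psi> x \<noteq> 0"
    and psi_nontrivial: "\<exists>x. x ^ q = x \<and> \<psi> x \<noteq> 1"
begin

abbreviation Tr :: "'a \<Rightarrow> 'a" where "Tr \<equiv> trace_kd q d"

abbreviation \<psi>\<^sub>d :: "'a \<Rightarrow> complex" where "\<psi>\<^sub>d \<equiv> psi_d q d \<psi>"

lemma q_dvd_card: "q dvd card (UNIV :: 'a set)"
  using card_UNIV d_pos by (simp add: dvd_power)

lemma power_q_power_d: "(x :: 'a) ^ (q ^ d) = x"
  using field_power_card_eq_self[of x] card_UNIV by simp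

lemma power_q_power_mult_d: "(x :: 'a) ^ (q ^ (d * j)) = x"
proof (induction j)
  case (Suc j)
  have "x ^ (q ^ (d * Suc j)) = (x ^ (q ^ (d * j))) ^ (q ^ d)"
    by (simp add: power_add mult.commute flip: power_mult)
  then show ?case
    using Suc power_q_power_d by simp
qed simp

lemma frobenius_root: "((x :: 'a) ^ (q ^ ((d - 1) * E))) ^ (q ^ E) = x"
proof -
  have "(x ^ (q ^ ((d - 1) * E))) ^ (q ^ E) = x ^ (q ^ ((d - 1) * E + E))"
    by (simp add: power_add power_mult)
  also have "(d - 1) * E + E = d * E"
    using d_pos by (simp add: algebra_simps)
  finally show ?thesis
    by (simp only: power_q_power_mult_d)
qed

lemma power_q_power_fixed: "(l :: 'a) ^ q = l \<Longrightarrow> l ^ (q ^ E) = l"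
  by (induction E) (simp_all add: power_mult)

lemma trace_add: "Tr (x + y) = Tr x + Tr y"
  unfolding trace_kd_def by (simp add: frobenius_add[OF q_dvd_card] sum.distrib)

lemma trace_zero: "Tr 0 = 0"
  unfolding trace_kd_def using q_ge_2 by (simp add: power_0_left)

lemma trace_power_q: "Tr x ^ q = Tr x"
proof -
  have "Tr x ^ q = (\<Sum>j<d. x ^ (q ^ Suc j))"
    using frobenius_sum[OF q_dvd_card, of "\<lambda>j. x ^ (q ^ j)" "{..<d}" 1]
    by (simp add: trace_kd_def mult.commute flip: power_mult)
  also have "\<dots> = Tr x"
  proof -
    have "x + (\<Sum>j<d. x ^ (q ^ Suc j)) = Tr x + x"
      using sum.lessThan_Suc_shift[of "\<lambda>j. x ^ (q ^ j)" d]
      by (simp add: trace_kd_def power_q_power_d)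
    then show ?thesis
      by simp
  qed
  finally show ?thesis .
qed

lemma trace_frobenius: "Tr (x ^ (q ^ E)) = Tr x"
proof -
  have "Tr (x ^ (q ^ E)) = Tr x ^ (q ^ E)"
    unfolding trace_kd_def frobenius_sum[OF q_dvd_card]
    by (simp add: mult.commute flip: power_mult)
  then show ?thesis
    using power_q_power_fixed[OF trace_power_q] by simp
qed

lemma trace_mult_fixed: "(l :: 'a) ^ q = l \<Longrightarrow> Tr (l * x) = l * Tr x"
  unfolding trace_kd_def by (simp add: power_mult_distrib power_q_power_fixed sum_distrib_left)

lemma trace_not_identically_zero: "\<exists>y. Tr y \<noteq> 0"
proof (rule ccontr)
  assume "\<nexists>y. Tr y \<noteq> 0"
  define P :: "'a poly" where "P = (\<Sum>j<d. monom 1 (q ^ j))"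
  have coeff_P: "coeff P i = (\<Sum>j<d. if q ^ j = i then 1 else 0)" for i
    unfolding P_def by (simp add: coeff_sum coeff_monom)
  have power_q_inj: "q ^ i = q ^ j \<longleftrightarrow> i = j" for i j
    using q_ge_2 by (simp add: power_inject_exp)
  have "coeff P (q ^ (d - 1)) = 1"
    using d_pos by (simp add: coeff_P power_q_inj)
  then have "P \<noteq> 0"
    by auto
  have "degree P \<le> q ^ (d - 1)"
  proof (rule degree_le, intro allI impI)
    fix i assume i: "q ^ (d - 1) < i"
    have "q ^ j \<noteq> i" if "j < d" for j
    proof -
      have "q ^ j \<le> q ^ (d - 1)"
        using that q_ge_2 by (intro power_increasing) auto
      then show ?thesis
        using i by simp
    qed
    then show "coeff P i = 0"
      unfolding coeff_P by (intro sum.neutral) auto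
  qed
  also have "\<dots> < q ^ d"
    using q_ge_2 d_pos by (intro power_strict_increasing) auto
  also have "q ^ d = card {x. poly P x = 0}"
    using \<open>\<nexists>y. Tr y \<noteq> 0\<close> card_UNIV
    by (simp add: P_def trace_kd_def poly_sum poly_monom)
  finally show False
    using card_poly_roots_bound[OF \<open>P \<noteq> 0\<close>] by simp
qed

lemma psi_zero: "\<psi> 0 = 1"
proof -
  have "\<psi> 0 = \<psi> 0 * \<psi> 0"
    using psi_add[of 0 0] q_ge_2 by simp
  then show ?thesis
    using psi_nonzero[of 0] q_ge_2 by simp
qed

lemma psi_d_zero: "\<psi>\<^sub>d 0 = 1"
  by (simp add: psi_d_def trace_zero psi_zero)

lemma psi_d_add: "\<psi>\<^sub>d (x + y) = \<psi>\<^sub>d x * \<psi>\<^sub>d y"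
  unfolding psi_d_def trace_add by (intro psi_add trace_power_q)

lemma psi_d_frobenius: "\<psi>\<^sub>d (x ^ (q ^ E)) = \<psi>\<^sub>d x"
  unfolding psi_d_def trace_frobenius ..

lemma psi_d_nontrivial: "\<exists>y. \<psi>\<^sub>d y \<noteq> 1"
proof -
  obtain t where t: "t ^ q = t" "\<psi> t \<noteq> 1"
    using psi_nontrivial by blast
  obtain y where y: "Tr y \<noteq> 0"
    using trace_not_identically_zero by blast
  have "(t / Tr y) ^ q = t / Tr y"
    using t(1) trace_power_q by (simp add: power_divide)
  then have "Tr (t / Tr y * y) = t / Tr y * Tr y"
    by (rule trace_mult_fixed)
  also have "\<dots> = t"
    using y by simp
  finally show ?thesis
    using t(2) unfolding psi_d_def by metis
qed

lemma sum_psi_d: "(\<Sum>y\<in>UNIV. \<psi>\<^sub>d y) = 0"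
proof -
  obtain t where t: "\<psi>\<^sub>d t \<noteq> 1"
    using psi_d_nontrivial by blast
  have "(\<Sum>y\<in>UNIV. \<psi>\<^sub>d y) = (\<Sum>y\<in>UNIV. \<psi>\<^sub>d (y + t))"
    by (rule sum.reindex_bij_witness[of _ "\<lambda>y. y + t" "\<lambda>y. y - t"]) auto
  also have "\<dots> = (\<Sum>y\<in>UNIV. \<psi>\<^sub>d y) * \<psi>\<^sub>d t"
    by (simp add: psi_d_add sum_distrib_right)
  finally show ?thesis
    using t by (metis mult.right_neutral mult_cancel_left)
qed

lemma sum_psi_d_mult: "(\<Sum>y\<in>UNIV. \<psi>\<^sub>d (c * y)) = (if c = 0 then of_nat (q ^ d) else 0)"
proof (cases "c = 0")
  case True
  then show ?thesis
    using card_UNIV by (simp add: psi_d_zero)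
next
  case False
  have "(\<Sum>y\<in>UNIV. \<psi>\<^sub>d (c * y)) = (\<Sum>y\<in>UNIV. \<psi>\<^sub>d y)"
    by (rule sum.reindex_bij_witness[of _ "\<lambda>y. y / c" "\<lambda>y. c * y"]) (use False in auto)
  then show ?thesis
    using False sum_psi_d by simp
qed

lemma sum_psi_d_frobenius_twist:
  "(\<Sum>v\<in>UNIV. \<psi>\<^sub>d (A * v ^ (q ^ E) + B * v)) = (if A + B ^ (q ^ E) = 0 then of_nat (q ^ d) else 0)"
proof -
  define A' where "A' = A ^ (q ^ ((d - 1) * E))"
  have A': "A' ^ (q ^ E) = A"
    unfolding A'_def by (rule frobenius_root)
  have "\<psi>\<^sub>d (A * v ^ (q ^ E) + B * v) = \<psi>\<^sub>d ((A' + B) * v)" for v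
  proof -
    have "\<psi>\<^sub>d (A * v ^ (q ^ E)) = \<psi>\<^sub>d (A' * v)"
      using psi_d_frobenius[of "A' * v" E] A' by (simp add: power_mult_distrib)
    then show ?thesis
      by (simp add: psi_d_add distrib_right)
  qed
  then have "(\<Sum>v\<in>UNIV. \<psi>\<^sub>d (A * v ^ (q ^ E) + B * v)) = (\<Sum>v\<in>UNIV. \<psi>\<^sub>d ((A' + B) * v))"
    by simp
  also have "\<dots> = (if A' + B = 0 then of_nat (q ^ d) else 0)"
    by (rule sum_psi_d_mult)
  also have "A' + B = 0 \<longleftrightarrow> (A' + B) ^ (q ^ E) = 0"
    using q_ge_2 by simp
  also have "(A' + B) ^ (q ^ E) = A + B ^ (q ^ E)"
    by (simp only: frobenius_add[OF q_dvd_card] A')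
  finally show ?thesis .
qed

lemma sum_psi_d_eliminate:
  assumes "\<alpha> \<noteq> 0"
  shows "(\<Sum>u\<in>UNIV. \<Sum>v\<in>UNIV. \<psi>\<^sub>d (H u + (\<alpha> * u * v ^ (q ^ E) + \<beta> * v))) =
    of_nat (q ^ d) * \<psi>\<^sub>d (H (- (\<beta> ^ (q ^ E)) / \<alpha>))"
proof -
  have split: "\<psi>\<^sub>d (H u + w) = \<psi>\<^sub>d (H u) * \<psi>\<^sub>d w" for u w
    by (rule psi_d_add)
  have "(\<Sum>u\<in>UNIV. \<Sum>v\<in>UNIV. \<psi>\<^sub>d (H u + (\<alpha> * u * v ^ (q ^ E) + \<beta> * v))) =
      (\<Sum>u\<in>UNIV. \<psi>\<^sub>d (H u) * (if \<alpha> * u + \<beta> ^ (q ^ E) = 0 then of_nat (q ^ d) else 0))"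
    by (simp only: split sum_psi_d_frobenius_twist flip: sum_distrib_left)
  also have "\<dots> = (\<Sum>u\<in>UNIV. if u = - (\<beta> ^ (q ^ E)) / \<alpha> then \<psi>\<^sub>d (H u) * of_nat (q ^ d) else 0)"
    unfolding add_eq_0_iff_eq_neg_divide[OF assms] by (intro sum.cong) auto
  finally show ?thesis
    by simp
qed

lemma Ssum_eliminate_last_two:
  assumes "a (Suc k) \<noteq> 0"
  shows "Ssum q d \<psi> (Suc (Suc (Suc k))) a e =
    of_nat (q ^ d) * Ssum q d \<psi> (Suc k)
      (a(k := - a k * inverse (a (Suc k)) ^ (q ^ e k) * a (Suc (Suc k)) ^ (q ^ (e k + e (Suc k)))))
      (e(k := e k + e (Suc k) + e (Suc (Suc k))))"
    (is "_ = _ * Ssum q d \<psi> (Suc k) ?a' ?e'")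
proof -
  define C where "C y = (\<Sum>i<k. a i * y i * y (Suc i) ^ (q ^ e i))" for y :: "nat \<Rightarrow> 'a"
  define \<beta> where "\<beta> y = a (Suc (Suc k)) * y 0 ^ (q ^ e (Suc (Suc k)))" for y :: "nat \<Rightarrow> 'a"
  have reduced: "C y + a k * y k * (- (\<beta> y ^ (q ^ e (Suc k))) / a (Suc k)) ^ (q ^ e k) =
      cyclic_phase q (Suc k) ?a' ?e' y" for y
  proof -
    have "C y = (\<Sum>i<k. ?a' i * y i * y (Suc i) ^ (q ^ ?e' i))"
      unfolding C_def by (intro sum.cong) auto
    moreover have "(- (\<beta> y ^ (q ^ e (Suc k))) / a (Suc k)) ^ (q ^ e k) =
        - (inverse (a (Suc k)) ^ (q ^ e k) * a (Suc (Suc k)) ^ (q ^ (e k + e (Suc k)))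
          * y 0 ^ (q ^ (e k + e (Suc k) + e (Suc (Suc k)))))"
      by (simp add: \<beta>_def frobenius_uminus[OF q_dvd_card] power_divide power_mult_distrib
          divide_inverse power_inverse ac_simps flip: power_mult power_add)
    ultimately show ?thesis
      by (simp add: cyclic_phase_Suc)
  qed
  have "Ssum q d \<psi> (Suc (Suc (Suc k))) a e =
      (\<Sum>y\<in>PiE {..<Suc k} (\<lambda>_. UNIV). \<Sum>u\<in>UNIV. \<Sum>v\<in>UNIV.
        \<psi>\<^sub>d (cyclic_phase q (Suc (Suc (Suc k))) a e (y(Suc k := u, Suc (Suc k) := v))))"
    unfolding Ssum_eq_sum_cyclic_phase sum_PiE_lessThan_Suc[where m = "Suc (Suc k)"]
      sum_PiE_lessThan_Suc[where m = "Suc k"] ..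
  also have "\<dots> = (\<Sum>y\<in>PiE {..<Suc k} (\<lambda>_. UNIV). of_nat (q ^ d) * \<psi>\<^sub>d (cyclic_phase q (Suc k) ?a' ?e' y))"
  proof (rule sum.cong)
    fix y :: "nat \<Rightarrow> 'a"
    have "(\<Sum>u\<in>UNIV. \<Sum>v\<in>UNIV.
          \<psi>\<^sub>d (cyclic_phase q (Suc (Suc (Suc k))) a e (y(Suc k := u, Suc (Suc k) := v)))) =
        (\<Sum>u\<in>UNIV. \<Sum>v\<in>UNIV. \<psi>\<^sub>d ((C y + a k * y k * u ^ (q ^ e k))
          + (a (Suc k) * u * v ^ (q ^ e (Suc k)) + \<beta> y * v)))"
      unfolding cyclic_phase_update_last_two C_def \<beta>_def by (simp only: mult.assoc)
    also have "\<dots> = of_nat (q ^ d) *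
        \<psi>\<^sub>d (C y + a k * y k * (- (\<beta> y ^ (q ^ e (Suc k))) / a (Suc k)) ^ (q ^ e k))"
      by (rule sum_psi_d_eliminate[OF assms])
    finally show "(\<Sum>u\<in>UNIV. \<Sum>v\<in>UNIV.
          \<psi>\<^sub>d (cyclic_phase q (Suc (Suc (Suc k))) a e (y(Suc k := u, Suc (Suc k) := v)))) =
        of_nat (q ^ d) * \<psi>\<^sub>d (cyclic_phase q (Suc k) ?a' ?e' y)"
      unfolding reduced .
  qed simp
  also have "\<dots> = of_nat (q ^ d) * Ssum q d \<psi> (Suc k) ?a' ?e'"
    by (simp add: Ssum_eq_sum_cyclic_phase sum_distrib_left)
  finally show ?thesis .
qed

lemma Ssum_two_variables:
  assumes "a 0 \<noteq> 0"
  shows "Ssum q d \<psi> 2 a e = of_nat (q ^ d) *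
    of_nat (card {x. x = - inverse (a 0) * a 1 ^ (q ^ e 0) * x ^ (q ^ (e 0 + e 1))})"
proof -
  define P where "P u \<longleftrightarrow> u = - inverse (a 0) * a 1 ^ (q ^ e 0) * u ^ (q ^ (e 0 + e 1))" for u
  have inner: "(\<Sum>v\<in>UNIV. \<psi>\<^sub>d (cyclic_phase q 2 a e (y(0 := u, Suc 0 := v)))) =
      (if P u then of_nat (q ^ d) else 0)" for y u
  proof -
    have "cyclic_phase q 2 a e (y(0 := u, Suc 0 := v)) =
        a 0 * u * v ^ (q ^ e 0) + a 1 * u ^ (q ^ e 1) * v" for v
      by (simp add: cyclic_phase_def numeral_2_eq_2 ac_simps)
    moreover have "a 0 * u + (a 1 * u ^ (q ^ e 1)) ^ (q ^ e 0) = 0 \<longleftrightarrow> P u"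
    proof -
      have "(a 1 * u ^ (q ^ e 1)) ^ (q ^ e 0) = a 1 ^ (q ^ e 0) * u ^ (q ^ (e 0 + e 1))"
        by (simp add: power_mult_distrib power_add mult.commute flip: power_mult)
      then have "a 0 * u + (a 1 * u ^ (q ^ e 1)) ^ (q ^ e 0) = 0 \<longleftrightarrow>
          u = - (a 1 ^ (q ^ e 0) * u ^ (q ^ (e 0 + e 1))) / a 0"
        by (simp only: add_eq_0_iff_eq_neg_divide[OF assms])
      then show ?thesis
        by (simp add: P_def divide_inverse ac_simps)
    qed
    ultimately show ?thesis
      by (simp add: sum_psi_d_frobenius_twist)
  qed
  have "Ssum q d \<psi> 2 a e =
      (\<Sum>y\<in>PiE {..<0} (\<lambda>_. UNIV). \<Sum>u\<in>UNIV. \<Sum>v\<in>UNIV.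
        \<psi>\<^sub>d (cyclic_phase q 2 a e (y(0 := u, Suc 0 := v))))"
    unfolding Ssum_eq_sum_cyclic_phase numeral_2_eq_2 sum_PiE_lessThan_Suc[where m = "Suc 0"]
      sum_PiE_lessThan_Suc[where m = 0] ..
  also have "\<dots> = (\<Sum>u\<in>UNIV. if P u then of_nat (q ^ d) else 0)"
    by (simp add: inner)
  also have "\<dots> = of_nat (q ^ d) * of_nat (card {u. P u})"
    by (simp add: sum.If_cases)
  finally show ?thesis
    unfolding P_def .
qed

end

theorem mainTheorem6:
  fixes \<psi> :: "'a::{field,finite} \<Rightarrow> complex"
    and q d n :: nat and a :: "nat \<Rightarrow> 'a" and e :: "nat \<Rightarrow> nat"
  assumes q: "q \<ge> 2" and d: "d \<ge> 1"
    and card_kd: "card (UNIV::'a set) = q ^ d"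
    and card_k: "card {x::'a. x ^ q = x} = q"
    and psi_add: "\<And>x y. x ^ q = x \<Longrightarrow> y ^ q = y \<Longrightarrow> \<psi> (x + y) = \<psi> x * \<psi> y"
    and psi_nz: "\<And>x. x ^ q = x \<Longrightarrow> \<psi> x \<noteq> 0"
    and psi_nontriv: "\<exists>x. x ^ q = x \<and> \<psi> x \<noteq> 1"
    and n: "n \<ge> 1"
    and e_pos: "\<And>i. i < n \<Longrightarrow> e i \<ge> 1"
    and a_nz: "\<And>i. i < n \<Longrightarrow> a i \<noteq> 0"
  shows "(n \<ge> 3 \<longrightarrow>
            Ssum q d \<psi> n a e =
              of_nat (q ^ d) * Ssum q d \<psi> (n - 2)
                (a (n - 3 := - a (n - 3) * (inverse (a (n - 2))) ^ (q ^ e (n - 3))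
                              * (a (n - 1)) ^ (q ^ (e (n - 3) + e (n - 2)))))
                (e (n - 3 := e (n - 3) + e (n - 2) + e (n - 1))))
       \<and> (n = 2 \<longrightarrow>
            Ssum q d \<psi> 2 a e =
              of_nat (q ^ d) * of_nat (card {x::'a.
                 x = - inverse (a 0) * (a 1) ^ (q ^ e 0) * x ^ (q ^ (e 0 + e 1))}))"
proof -
  interpret trace_character q d \<psi>
    using q d card_kd psi_add psi_nz psi_nontriv by unfold_locales
  have "n < 2 \<or> n = 2 \<or> (\<exists>k. n = Suc (Suc (Suc k)))"
    by presburger
  then consider (ge3) k where "n = Suc (Suc (Suc k))" | (eq2) "n = 2" | (lt2) "n < 2"
    by blast
  then show ?thesis
  proof cases
    case ge3
    then show ?thesis
      using Ssum_eliminate_last_two[of a k e] a_nz by simp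
  next
    case eq2
    then show ?thesis
      using Ssum_two_variables[of a e] a_nz by simp
  qed simp
qed

end
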